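(* Let $X$ be a decomposable continuum and $x\in X$ a null-aposyndetic point such that $X$ is not coastal at $x$. Then for every thick subcontinuum $T\subset X$, the set $\overline{X-T}$ is a thick subcontinuum of $X$.
   Context: A continuum is a nondegenerate compact connected Hausdorff space; it is decomposable if it is the union of two proper subcontinua. A subcontinuum is thick if it is proper and has nonempty interior. A point $x$ is null-aposyndetic if no proper subcontinuum of $X$ contains $x$ in its interior. $\kappa(x;p)$ is the union of all subcontinua $M\neq X$ with $x\in M$, $p\notin M$; $X$ is coastal at $x$ if $\kappa(x;p)$ is dense for some $p\neq x$. *)

theory Defs
  imports "HOL-Analysis.Analysis"
begin

definition continuum :: "'a topology \<Rightarrow> bool" where
  "continuum X \<longleftrightarrow> compact_space X \<and> connected_space X \<and> Hausdorff_space X \<and>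
     (\<exists>a b. a \<in> topspace X \<and> b \<in> topspace X \<and> a \<noteq> b)"

definition subcontinuum :: "'a topology \<Rightarrow> 'a set \<Rightarrow> bool" where
  "subcontinuum X M \<longleftrightarrow> M \<subseteq> topspace X \<and> M \<noteq> {} \<and> compactin X M \<and> connectedin X M"

definition decomposable :: "'a topology \<Rightarrow> bool" where
  "decomposable X \<longleftrightarrow> (\<exists>A B. subcontinuum X A \<and> subcontinuum X B \<and>
     A \<noteq> topspace X \<and> B \<noteq> topspace X \<and> A \<union> B = topspace X)"

definition thick :: "'a topology \<Rightarrow> 'a set \<Rightarrow> bool" where
  "thick X T \<longleftrightarrow> subcontinuum X T \<and> T \<noteq> topspace X \<and> X interior_of T \<noteq> {}"

definition null_aposyndetic :: "'a topology \<Rightarrow> 'a \<Rightarrow> bool" where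
  "null_aposyndetic X x \<longleftrightarrow> x \<in> topspace X \<and>
     \<not> (\<exists>M. subcontinuum X M \<and> M \<noteq> topspace X \<and> x \<in> X interior_of M)"

definition kappa :: "'a topology \<Rightarrow> 'a \<Rightarrow> 'a \<Rightarrow> 'a set" where
  "kappa X x p = \<Union>{M. subcontinuum X M \<and> M \<noteq> topspace X \<and> x \<in> M \<and> p \<notin> M}"

definition coastal_at :: "'a topology \<Rightarrow> 'a \<Rightarrow> bool" where
  "coastal_at X x \<longleftrightarrow> (\<exists>p \<in> topspace X. p \<noteq> x \<and> X closure_of (kappa X x p) = topspace X)"

end

theory Submission
  imports Defs
begin

text \<open>
  Suppose the closure C of the complement of a subcontinuum T splits into disjoint nonempty
  closed sets A and B. Each of them meets the complement of T, and T \<union> A is again a continuum: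
  a separation of T \<union> A must put T on one side, and the other side would then be clopen in the
  connected space T \<union> A \<union> B. This continuum misses a point of B - T, so it is proper, and its
  interior contains the open set X - B; likewise for T \<union> B and X - A. As x lies outside A or
  outside B, it would be interior to a proper subcontinuum, contradicting null-aposyndesis.
  So C is connected, and it is thick because its interior contains X - T while its complement
  is the nonempty interior of T.
\<close>

lemma closedin_not_connectedin_split:
  assumes "closedin X S" and "\<not> connectedin X S"
  obtains A B where "closedin X A" "closedin X B" "A \<union> B = S" "A \<inter> B = {}" "A \<noteq> {}" "B \<noteq> {}"
proof -
  obtain E1 E2 where E: "closedin X E1" "closedin X E2" "S \<subseteq> E1 \<union> E2"
    "E1 \<inter> E2 \<inter> S = {}" "E1 \<inter> S \<noteq> {}" "E2 \<inter> S \<noteq> {}"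
    using assms closedin_subset unfolding connectedin_closedin by metis
  show thesis
    by (rule that[of "E1 \<inter> S" "E2 \<inter> S"]) (use E assms(1) in auto)
qed

lemma connectedin_Un_of_closed_partition:
  assumes X: "connected_space X"
    and A: "closedin X A" and B: "closedin X B" and AB: "A \<inter> B = {}"
    and T: "closedin X T" "connectedin X T" "T \<noteq> {}"
    and cover: "topspace X = T \<union> A \<union> B"
  shows "connectedin X (T \<union> A)"
proof (rule ccontr)
  assume "\<not> connectedin X (T \<union> A)"
  then obtain F G where F: "closedin X F" and G: "closedin X G"
    and FG: "F \<union> G = T \<union> A" "F \<inter> G = {}" "F \<noteq> {}" "G \<noteq> {}"
    using closedin_not_connectedin_split A T(1) closedin_Un by metis
  have no_split_around_T: False
    if "T \<subseteq> F'" "closedin X F'" "closedin X G'" "F' \<union> G' = T \<union> A" "F' \<inter> G' = {}" "G' \<noteq> {}"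
    for F' G'
  proof -
    have "G' \<subseteq> A" using that by blast
    then have "closedin X (F' \<union> B)" "(F' \<union> B) \<union> G' = topspace X" "(F' \<union> B) \<inter> G' = {}"
      using that B AB cover by auto
    then show False
      using X \<open>closedin X G'\<close> \<open>G' \<noteq> {}\<close> \<open>T \<subseteq> F'\<close> T(3)
      unfolding connected_space_closedin_eq by blast
  qed
  have "T \<subseteq> F \<or> T \<subseteq> G"
    using connectedin_subset_separated_union[OF T(2)] separatedin_closed_sets[OF F G] FG
    by (auto simp: disjnt_def)
  then show False
    using no_split_around_T[OF _ F G] no_split_around_T[OF _ G F] FG by (auto simp: Un_commute)
qed

lemma subcontinuum_Un_of_closed_partition:
  assumes X: "compact_space X" "connected_space X" "Hausdorff_space X"
    and A: "closedin X A" and B: "closedin X B" and AB: "A \<inter> B = {}"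
    and T: "subcontinuum X T" and cover: "topspace X = T \<union> A \<union> B"
  shows "subcontinuum X (T \<union> A)"
proof -
  have T_ne: "T \<noteq> {}" and T_conn: "connectedin X T" and T_compact: "compactin X T"
    using T unfolding subcontinuum_def by blast+
  have T_closed: "closedin X T"
    using X(3) T_compact by (rule compactin_imp_closedin)
  have "connectedin X (T \<union> A)"
    using connectedin_Un_of_closed_partition X(2) A B AB T_closed T_conn T_ne cover .
  moreover have "compactin X (T \<union> A)"
    using X(1) T_closed A by (intro closedin_compact_space closedin_Un)
  ultimately show ?thesis
    using T_ne cover unfolding subcontinuum_def by auto
qed

lemma connectedin_closure_complement_subcontinuum:
  assumes X: "compact_space X" "connected_space X" "Hausdorff_space X"
    and x: "null_aposyndetic X x" and T: "subcontinuum X T"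
  shows "connectedin X (X closure_of (topspace X - T))"
proof (rule ccontr)
  let ?C = "X closure_of (topspace X - T)"
  have T_sub: "T \<subseteq> topspace X"
    using T unfolding subcontinuum_def by blast
  have complement_in_C: "topspace X - T \<subseteq> ?C"
    by (rule closure_of_subset[OF Diff_subset])
  have piece_escapes_T: "\<not> P \<subseteq> T"
    if "closedin X Q" "P \<union> Q = ?C" "P \<inter> Q = {}" "P \<noteq> {}" for P Q
  proof
    assume "P \<subseteq> T"
    then have "topspace X - T \<subseteq> Q"
      using complement_in_C that(2) by blast
    then have "?C \<subseteq> Q"
      using that(1) by (rule closure_of_minimal)
    then show False using that(2-4) by blast
  qed
  have no_piece_avoiding_x: False
    if "closedin X P" "closedin X Q" "P \<union> Q = ?C" "P \<inter> Q = {}" "Q \<noteq> {}" "x \<notin> Q" for P Q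
  proof -
    have "\<not> Q \<subseteq> T"
      by (rule piece_escapes_T[of P]) (use that in auto)
    then obtain q where q: "q \<in> Q" "q \<notin> T" by blast
    have "P \<union> Q \<subseteq> topspace X"
      using that(3) closure_of_subset_topspace by metis
    then have cover: "topspace X = T \<union> P \<union> Q"
      using complement_in_C that(3) T_sub by blast
    have "subcontinuum X (T \<union> P)"
      using subcontinuum_Un_of_closed_partition X that(1,2,4) T cover .
    moreover have "T \<union> P \<noteq> topspace X"
      using q that(4) cover by auto
    moreover have "x \<in> X interior_of (T \<union> P)"
    proof -
      have "openin X (topspace X - Q)"
        using that(2) by blast
      then have "topspace X - Q \<subseteq> X interior_of (T \<union> P)"
        using cover by (intro interior_of_maximal) auto
      then show ?thesis using x that(6) unfolding null_aposyndetic_def by blast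
    qed
    ultimately show False
      using x unfolding null_aposyndetic_def by blast
  qed
  assume "\<not> connectedin X ?C"
  then obtain A B where "closedin X A" "closedin X B" "A \<union> B = ?C" "A \<inter> B = {}" "A \<noteq> {}" "B \<noteq> {}"
    using closedin_not_connectedin_split closedin_closure_of by metis
  then show False
    using no_piece_avoiding_x[of A B] no_piece_avoiding_x[of B A] by (auto simp: Un_commute)
qed

lemma thick_closure_complement:
  assumes X: "compact_space X" "Hausdorff_space X" and T: "thick X T"
    and conn: "connectedin X (X closure_of (topspace X - T))"
  shows "thick X (X closure_of (topspace X - T))"
proof -
  let ?C = "X closure_of (topspace X - T)"
  have T_sub: "T \<subseteq> topspace X" and T_ne_top: "T \<noteq> topspace X"
    and T_interior: "X interior_of T \<noteq> {}" and T_compact: "compactin X T"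
    using T unfolding thick_def subcontinuum_def by blast+
  have T_closed: "closedin X T"
    using X(2) T_compact by (rule compactin_imp_closedin)
  have T_proper: "topspace X - T \<noteq> {}"
    using T_sub T_ne_top by blast
  have complement_in_C: "topspace X - T \<subseteq> ?C"
    by (rule closure_of_subset[OF Diff_subset])
  have "openin X (topspace X - T)"
    using T_closed by blast
  then have complement_in_interior: "topspace X - T \<subseteq> X interior_of ?C"
    using complement_in_C by (intro interior_of_maximal)
  have "subcontinuum X ?C"
    unfolding subcontinuum_def
  proof (intro conjI)
    show "?C \<subseteq> topspace X" by (rule closure_of_subset_topspace)
    show "?C \<noteq> {}" using complement_in_C T_proper by blast
    show "compactin X ?C" by (rule closedin_compact_space[OF X(1)]) simp
  qed (rule conn)
  moreover have "?C \<noteq> topspace X"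
    unfolding closure_of_complement using T_interior interior_of_subset_topspace[of X T] by blast
  moreover have "X interior_of ?C \<noteq> {}"
    using complement_in_interior T_proper by blast
  ultimately show ?thesis
    unfolding thick_def by blast
qed

theorem mainTheorem20:
  fixes X :: "'a topology" and x :: 'a and T :: "'a set"
  assumes "continuum X"
    and "decomposable X"
    and "x \<in> topspace X"
    and "null_aposyndetic X x"
    and "\<not> coastal_at X x"
    and "thick X T"
  shows "thick X (X closure_of (topspace X - T))"
proof -
  have X: "compact_space X" "connected_space X" "Hausdorff_space X"
    using assms(1) unfolding continuum_def by auto
  have "subcontinuum X T"
    using assms(6) unfolding thick_def by blast
  with X assms(4) have "connectedin X (X closure_of (topspace X - T))"
    by (intro connectedin_closure_complement_subcontinuum)
  then show ?thesis
    by (rule thick_closure_complement[OF X(1,3) assms(6)])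
qed

end
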